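(* Let $\varphi:\mathbb{R}\to\mathbb{R}$ be a positive definite function with $\varphi(0)=1$ and $|\varphi(x)|<1$ for $x\neq 0$, and let $(X(u,t))_{u\in\mathbb{R},t\ge 0}$ be the point motion of a Harris flow with infinitesimal covariation function $\varphi$. Then, almost surely, \[ \limsup_{t\to 0}\ \sup_{u\in[0,1]}\frac{|X(u,t)-u|}{\sqrt{t\ln t^{-1}}}\le 1 . \]
   Context: The point motion of a Harris flow with infinitesimal covariation function $\varphi$ is a family $(X(u,t))_{u\in\mathbb{R},t\ge0}$ of continuous martingales adapted to a common filtration $(\mathcal{F}_t)$ such that: (1) for each $u$, $X(u,\cdot)$ is an $(\mathcal{F}_t)$-Brownian motion started at $u$; (2) for all $u,v$, $\frac{d}{dt}\langle X(u,t),X(v,t)\rangle=\varphi(X(u,t)-X(v,t))$, where $\langle\cdot,\cdot\rangle$ denotes quadratic covariation; (3) for each $t$, $u\mapsto X(u,t)$ is nondecreasing. The modification of $X$ used is separable and continuous in $t$ for each $u$. *)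

theory Defs
  imports "HOL-Probability.Probability"
begin

definition filtration :: "'a measure \<Rightarrow> (real \<Rightarrow> 'a measure) \<Rightarrow> bool" where
  "filtration M F \<longleftrightarrow> (\<forall>t. subalgebra M (F t)) \<and>
     (\<forall>s t. 0 \<le> s \<longrightarrow> s \<le> t \<longrightarrow> sets (F s) \<subseteq> sets (F t))"

definition martingale :: "'a measure \<Rightarrow> (real \<Rightarrow> 'a measure) \<Rightarrow> (real \<Rightarrow> 'a \<Rightarrow> real) \<Rightarrow> bool" where
  "martingale M F Z \<longleftrightarrow>
     (\<forall>t\<ge>0. Z t \<in> borel_measurable (F t) \<and> integrable M (Z t)) \<and>
     (\<forall>s t A. 0 \<le> s \<longrightarrow> s \<le> t \<longrightarrow> A \<in> sets (F s) \<longrightarrow>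
        (LINT \<omega>:A|M. Z t \<omega>) = (LINT \<omega>:A|M. Z s \<omega>))"

definition brownian_motion_from ::
  "'a measure \<Rightarrow> (real \<Rightarrow> 'a measure) \<Rightarrow> (real \<Rightarrow> 'a \<Rightarrow> real) \<Rightarrow> real \<Rightarrow> bool" where
  "brownian_motion_from M F B u \<longleftrightarrow>
     (\<forall>t\<ge>0. B t \<in> borel_measurable (F t)) \<and>
     (AE \<omega> in M. B 0 \<omega> = u) \<and>
     (AE \<omega> in M. continuous_on {0..} (\<lambda>t. B t \<omega>)) \<and>
     (\<forall>s t A C. 0 \<le> s \<longrightarrow> s < t \<longrightarrow> A \<in> sets (F s) \<longrightarrow> C \<in> sets borel \<longrightarrow>
        measure M (A \<inter> {\<omega> \<in> space M. B t \<omega> - B s \<omega> \<in> C}) =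
        measure M A * measure (density lborel (normal_density 0 (sqrt (t - s)))) C)"

definition positive_definite :: "(real \<Rightarrow> real) \<Rightarrow> bool" where
  "positive_definite \<phi> \<longleftrightarrow>
     (\<forall>(n::nat) (x::nat \<Rightarrow> real) (c::nat \<Rightarrow> complex).
        let S = (\<Sum>i<n. \<Sum>j<n. c i * cnj (c j) * complex_of_real (\<phi> (x i - x j)))
        in Im S = 0 \<and> Re S \<ge> 0)"

definition separable_process :: "'a measure \<Rightarrow> (real \<Rightarrow> real \<Rightarrow> 'a \<Rightarrow> real) \<Rightarrow> bool" where
  "separable_process M X \<longleftrightarrow>
     (\<exists>D. countable D \<and> D \<subseteq> UNIV \<times> {0..} \<and>
        (AE \<omega> in M. \<forall>u t. 0 \<le> t \<longrightarrow>
           (\<exists>f :: nat \<Rightarrow> real \<times> real. (\<forall>n. f n \<in> D) \<and> f \<longlonglongrightarrow> (u, t) \<and>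
              (\<lambda>n. X (fst (f n)) (snd (f n)) \<omega>) \<longlonglongrightarrow> X u t \<omega>)))"

text \<open>The covariation
  condition d<X(u),X(v)>_t = \<phi>(X(u,t)-X(v,t)) dt is expressed by the defining property of
  the quadratic covariation of continuous martingales: X(u,t)X(v,t) - \<integral>_0^t \<phi>(X(u,s)-X(v,s)) ds
  is a martingale.\<close>
definition harris_point_motion ::
  "'a measure \<Rightarrow> (real \<Rightarrow> 'a measure) \<Rightarrow> (real \<Rightarrow> real) \<Rightarrow> (real \<Rightarrow> real \<Rightarrow> 'a \<Rightarrow> real) \<Rightarrow> bool" where
  "harris_point_motion M F \<phi> X \<longleftrightarrow>
     filtration M F \<and>
     (\<forall>u. brownian_motion_from M F (X u) u) \<and>
     (\<forall>u. martingale M F (X u)) \<and>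
     (\<forall>u v. martingale M F
        (\<lambda>t \<omega>. X u t \<omega> * X v t \<omega> - (LINT s:{0..t}|lborel. \<phi> (X u s \<omega> - X v s \<omega>)))) \<and>
     (\<forall>t\<ge>0. \<forall>\<omega>\<in>space M. mono (\<lambda>u. X u t \<omega>)) \<and>
     separable_process M X"

end

theory Submission
  imports Defs
begin

text \<open>Only the Brownian marginals of the flow and the monotonicity of u \<mapsto> X(u,t) enter.
  Fix L > 0. On the time scale e^(-mL) watch the trajectories started from a grid of about
  e^(mL/2) points of [0,1]. By Levy's maximal inequality and the Gaussian tail, the probability
  that one of them leaves the band of half-width e^L sqrt(e^(-(m+1)L) mL) before time e^(-mL)
  is of order exp((1 - e^L) mL/2), which is summable in m, so by Borel-Cantelli this eventually
  never happens. Monotonicity interpolates between grid points at the cost of the mesh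
  e^(-mL/2), which is o(sqrt(t ln(1/t))). Hence the limsup is at most e^L + L, and L \<rightarrow> 0.\<close>

lemma normal_density_mult_exp:
  assumes "0 < \<sigma>"
  shows "normal_density 0 \<sigma> x * exp (l * x) = exp (l\<^sup>2 * \<sigma>\<^sup>2 / 2) * normal_density (l * \<sigma>\<^sup>2) \<sigma> x"
proof -
  have "- x\<^sup>2 / (2 * \<sigma>\<^sup>2) + l * x = l\<^sup>2 * \<sigma>\<^sup>2 / 2 - (x - l * \<sigma>\<^sup>2)\<^sup>2 / (2 * \<sigma>\<^sup>2)"
    using assms by (simp add: field_simps power2_eq_square)
  then show ?thesis
    unfolding normal_density_def by (simp add: exp_add[symmetric] exp_diff mult_ac)
qed

lemma nn_integral_normal_mgf:
  assumes "0 < \<sigma>"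
  shows "(\<integral>\<^sup>+x. ennreal (normal_density 0 \<sigma> x * exp (l * x)) \<partial>lborel) = ennreal (exp (l\<^sup>2 * \<sigma>\<^sup>2 / 2))"
  using assms
  by (simp add: normal_density_mult_exp ennreal_mult nn_integral_cmult nn_integral_eq_integral)

lemma normal_tail_bound:
  assumes "0 < \<sigma>" "0 \<le> b"
  shows "measure (density lborel (normal_density 0 \<sigma>)) {x. b < \<bar>x\<bar>} \<le> 2 * exp (- b\<^sup>2 / (2 * \<sigma>\<^sup>2))"
proof -
  define l where "l = b / \<sigma>\<^sup>2"
  have "0 \<le> l"
    using assms by (simp add: l_def)
  have chernoff: "indicator {x. b < \<bar>x\<bar>} x \<le> exp (- l * b) * exp (l * x) + exp (- l * b) * exp (- l * x)"
    for x :: real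
  proof (cases "b < \<bar>x\<bar>")
    case True
    then have "0 \<le> l * x - l * b \<or> 0 \<le> - l * x - l * b"
      using mult_left_mono[of b "\<bar>x\<bar>" l] \<open>0 \<le> l\<close> by (cases "0 \<le> x") auto
    then have "1 \<le> exp (l * x - l * b) \<or> 1 \<le> exp (- l * x - l * b)"
      by auto
    then show ?thesis
      using True by (auto simp: exp_add[symmetric] intro: add_increasing add_increasing2)
  qed simp
  have "emeasure (density lborel (normal_density 0 \<sigma>)) {x. b < \<bar>x\<bar>}
      = (\<integral>\<^sup>+x. ennreal (normal_density 0 \<sigma> x * indicator {x. b < \<bar>x\<bar>} x) \<partial>lborel)"
    by (subst emeasure_density) (auto intro!: nn_integral_cong simp: indicator_def)
  also have "\<dots> \<le> (\<integral>\<^sup>+x. ennreal (exp (- l * b)) * ennreal (normal_density 0 \<sigma> x * exp (l * x))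
                   + ennreal (exp (- l * b)) * ennreal (normal_density 0 \<sigma> x * exp (- l * x)) \<partial>lborel)"
  proof (intro nn_integral_mono)
    fix x
    have "normal_density 0 \<sigma> x * indicator {x. b < \<bar>x\<bar>} x
        \<le> exp (- l * b) * (normal_density 0 \<sigma> x * exp (l * x))
          + exp (- l * b) * (normal_density 0 \<sigma> x * exp (- l * x))"
      using mult_left_mono[OF chernoff[of x], of "normal_density 0 \<sigma> x"]
      by (simp add: algebra_simps)
    then show "ennreal (normal_density 0 \<sigma> x * indicator {x. b < \<bar>x\<bar>} x)
        \<le> ennreal (exp (- l * b)) * ennreal (normal_density 0 \<sigma> x * exp (l * x))
          + ennreal (exp (- l * b)) * ennreal (normal_density 0 \<sigma> x * exp (- l * x))"
      by (simp add: ennreal_mult[symmetric] ennreal_plus[symmetric] ennreal_leI del: ennreal_plus)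
  qed
  also have "\<dots> = ennreal (exp (- l * b)) * ennreal (exp (l\<^sup>2 * \<sigma>\<^sup>2 / 2))
                   + ennreal (exp (- l * b)) * ennreal (exp ((- l)\<^sup>2 * \<sigma>\<^sup>2 / 2))"
    using nn_integral_normal_mgf[OF assms(1), of "- l"]
    by (subst nn_integral_add) (simp_all add: nn_integral_cmult nn_integral_normal_mgf[OF assms(1)])
  also have "\<dots> = ennreal (2 * (exp (- l * b) * exp (l\<^sup>2 * \<sigma>\<^sup>2 / 2)))"
    by (simp add: ennreal_mult[symmetric] ennreal_plus[symmetric] del: ennreal_plus)
  also have "exp (- l * b) * exp (l\<^sup>2 * \<sigma>\<^sup>2 / 2) = exp (- b\<^sup>2 / (2 * \<sigma>\<^sup>2))"
    using assms(1) by (simp add: l_def exp_add[symmetric] field_simps power2_eq_square)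
  finally show ?thesis
    by (simp add: measure_def enn2real_leI)
qed

lemma normal_half_line_measure:
  assumes "0 < \<sigma>"
  shows "1 / 2 \<le> measure (density lborel (normal_density 0 \<sigma>)) {x. 0 \<le> x}"
    and "1 / 2 \<le> measure (density lborel (normal_density 0 \<sigma>)) {x. x \<le> 0}"
proof -
  let ?N = "density lborel (normal_density 0 \<sigma>)"
  interpret N: prob_space ?N
    by (rule prob_space_normal_density[OF assms])
  have "emeasure ?N {x. x \<le> 0} = (\<integral>\<^sup>+x. ennreal (normal_density 0 \<sigma> x) * indicator {x. x \<le> 0} x \<partial>lborel)"
    by (subst emeasure_density) auto
  also have "\<dots> = (\<integral>\<^sup>+x. ennreal (normal_density 0 \<sigma> (0 + (-1) * x)) * indicator {x. x \<le> 0} (0 + (-1) * x) \<partial>lborel)"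
    by (subst nn_integral_real_affine[where c="-1" and t=0]) auto
  also have "\<dots> = (\<integral>\<^sup>+x. ennreal (normal_density 0 \<sigma> x) * indicator {x. 0 \<le> x} x \<partial>lborel)"
    by (intro nn_integral_cong) (simp add: normal_density_def indicator_def)
  also have "\<dots> = emeasure ?N {x. 0 \<le> x}"
    by (subst emeasure_density) auto
  finally have sym: "N.prob {x. x \<le> 0} = N.prob {x. 0 \<le> x}"
    by (simp add: measure_def)
  have "1 = N.prob UNIV"
    using N.prob_space by (simp add: space_density)
  also have "\<dots> \<le> N.prob {x. x \<le> 0} + N.prob {x::real. 0 \<le> x}"
    by (rule order_trans[OF _ measure_Un_le]) (auto intro: N.finite_measure_mono simp: sets_density)
  finally show "1 / 2 \<le> N.prob {x. 0 \<le> x}" "1 / 2 \<le> N.prob {x. x \<le> 0}"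
    using sym by auto
qed

lemma first_occurrence_UN:
  fixes P :: "nat \<Rightarrow> 'a \<Rightarrow> bool"
  shows "{x\<in>S. \<exists>k\<le>n. P k x} = (\<Union>k\<le>n. {x\<in>S. P k x \<and> (\<forall>j<k. \<not> P j x)})"
proof (intro equalityI subsetI)
  fix x assume "x \<in> {x\<in>S. \<exists>k\<le>n. P k x}"
  then obtain k where "x \<in> S" "k \<le> n" "P k x"
    by blast
  moreover obtain k0 where "P k0 x" "\<forall>j<k0. \<not> P j x"
    using exists_least_iff[of "\<lambda>k. P k x"] \<open>P k x\<close> by blast
  ultimately show "x \<in> (\<Union>k\<le>n. {x\<in>S. P k x \<and> (\<forall>j<k. \<not> P j x)})"
    by (intro UN_I[of k0]) (auto simp: not_less[symmetric])
qed auto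

lemma disjoint_family_first_occurrence:
  "disjoint_family_on (\<lambda>k::nat. {x\<in>S. P k x \<and> (\<forall>j<k. \<not> P j x)}) A"
  unfolding disjoint_family_on_def by (auto dest: linorder_neqE_nat)

lemma measure_le_twice_exceedance_kept:
  fixes Z W :: "'a \<Rightarrow> real"
  assumes "prob_space M" "subalgebra M G"
    and [measurable]: "Z \<in> borel_measurable G" "W \<in> borel_measurable M"
    and up: "\<And>A. A \<in> sets G \<Longrightarrow> measure M A / 2 \<le> measure M (A \<inter> {\<omega>\<in>space M. 0 \<le> W \<omega> - Z \<omega>})"
    and down: "\<And>A. A \<in> sets G \<Longrightarrow> measure M A / 2 \<le> measure M (A \<inter> {\<omega>\<in>space M. W \<omega> - Z \<omega> \<le> 0})"
    and A: "A \<in> sets G" "A \<subseteq> {\<omega>. b < \<bar>Z \<omega>\<bar>}" and "0 \<le> b"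
  shows "measure M A \<le> 2 * measure M (A \<inter> {\<omega>\<in>space M. b < \<bar>W \<omega>\<bar>})"
proof -
  interpret prob_space M by fact
  have sets_G: "sets G \<subseteq> sets M" and space_G: "space G = space M"
    using assms(2) by (auto simp: subalgebra_def)
  define Ap where "Ap = A \<inter> {\<omega>\<in>space G. 0 < Z \<omega>}"
  define Am where "Am = A \<inter> {\<omega>\<in>space G. Z \<omega> < 0}"
  have Ap_G: "Ap \<in> sets G" and Am_G: "Am \<in> sets G"
    unfolding Ap_def Am_def using A(1) by (intro sets.Int; measurable)+
  have [measurable]: "A \<in> sets M" "Ap \<in> sets M" "Am \<in> sets M" "Z \<in> borel_measurable M"
    using A(1) Ap_G Am_G sets_G measurable_from_subalg[OF assms(2,3)] by auto
  define Up where "Up = Ap \<inter> {\<omega>\<in>space M. 0 \<le> W \<omega> - Z \<omega>}"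
  define Down where "Down = Am \<inter> {\<omega>\<in>space M. W \<omega> - Z \<omega> \<le> 0}"
  have [measurable]: "Up \<in> sets M" "Down \<in> sets M"
    unfolding Up_def Down_def by measurable
  have "A = Ap \<union> Am" and "Ap \<inter> Am = {}"
    using A(2) sets.sets_into_space[OF A(1)] \<open>0 \<le> b\<close> by (auto simp: Ap_def Am_def)
  then have "measure M A = measure M Ap + measure M Am"
    by (simp add: finite_measure_Union)
  also have "\<dots> \<le> 2 * (measure M Up + measure M Down)"
    using up[OF Ap_G] down[OF Am_G] by (simp add: Up_def Down_def)
  also have "\<dots> = 2 * measure M (Up \<union> Down)"
    using \<open>Ap \<inter> Am = {}\<close> by (subst finite_measure_Union) (auto simp: Up_def Down_def)
  also have "\<dots> \<le> 2 * measure M (A \<inter> {\<omega>\<in>space M. b < \<bar>W \<omega>\<bar>})"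
  proof -
    have "Up \<union> Down \<subseteq> A \<inter> {\<omega>\<in>space M. b < \<bar>W \<omega>\<bar>}"
      using A(2) by (auto simp: Up_def Down_def Ap_def Am_def space_G)
    then show ?thesis
      by (intro mult_left_mono finite_measure_mono) auto
  qed
  finally show ?thesis .
qed

lemma levy_maximal_inequality:
  fixes Y :: "nat \<Rightarrow> 'a \<Rightarrow> real"
  assumes "prob_space M"
    and sub: "\<And>k. subalgebra M (G k)"
    and adapted: "\<And>j k. j \<le> k \<Longrightarrow> k \<le> n \<Longrightarrow> Y j \<in> borel_measurable (G k)"
    and up: "\<And>k A. k < n \<Longrightarrow> A \<in> sets (G k) \<Longrightarrow>
        measure M A / 2 \<le> measure M (A \<inter> {\<omega>\<in>space M. 0 \<le> Y n \<omega> - Y k \<omega>})"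
    and down: "\<And>k A. k < n \<Longrightarrow> A \<in> sets (G k) \<Longrightarrow>
        measure M A / 2 \<le> measure M (A \<inter> {\<omega>\<in>space M. Y n \<omega> - Y k \<omega> \<le> 0})"
    and "0 \<le> b"
  shows "measure M {\<omega>\<in>space M. \<exists>k\<le>n. b < \<bar>Y k \<omega>\<bar>} \<le> 2 * measure M {\<omega>\<in>space M. b < \<bar>Y n \<omega>\<bar>}"
proof -
  interpret prob_space M by fact
  define T where "T = {\<omega>\<in>space M. b < \<bar>Y n \<omega>\<bar>}"
  define E where "E k = {\<omega>\<in>space M. b < \<bar>Y k \<omega>\<bar> \<and> (\<forall>j<k. \<not> b < \<bar>Y j \<omega>\<bar>)}" for k
  have sets_G: "sets (G k) \<subseteq> sets M" and space_G: "space (G k) = space M" for k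
    using sub[of k] by (auto simp: subalgebra_def)
  have [measurable]: "Y n \<in> borel_measurable M"
    using measurable_from_subalg[OF sub adapted[OF order.refl order.refl]] .
  have E_G: "E k \<in> sets (G k)" if "k \<le> n" for k
  proof -
    have "E k = (\<Inter>j\<le>k. {\<omega>\<in>space (G k). if j < k then \<not> b < \<bar>Y j \<omega>\<bar> else b < \<bar>Y k \<omega>\<bar>})"
      by (auto simp: E_def space_G split: if_splits)
    also have "\<dots> \<in> sets (G k)"
      using adapted[OF _ that] by (intro sets.finite_INT) auto
    finally show ?thesis .
  qed
  have E_M [measurable]: "E k \<in> sets M" if "k \<le> n" for k
    using E_G[OF that] sets_G by auto
  have E_half: "measure M (E k) \<le> 2 * measure M (E k \<inter> T)" if "k \<le> n" for k
  proof (cases "k < n")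
    case True
    show ?thesis
      unfolding T_def using E_G[OF that] \<open>0 \<le> b\<close> up[OF True] down[OF True]
      by (intro measure_le_twice_exceedance_kept[OF \<open>prob_space M\<close> sub adapted[OF order.refl that]])
         (auto simp: E_def)
  next
    case False
    with that have "E k \<inter> T = E k"
      by (auto simp: E_def T_def)
    then show ?thesis
      by simp
  qed
  have E_disj: "disjoint_family_on E {..n}"
    unfolding E_def by (rule disjoint_family_first_occurrence)
  have "measure M {\<omega>\<in>space M. \<exists>k\<le>n. b < \<bar>Y k \<omega>\<bar>} = measure M (\<Union>k\<le>n. E k)"
    by (simp add: first_occurrence_UN E_def)
  also have "\<dots> = (\<Sum>k\<le>n. measure M (E k))"
    using E_disj by (intro finite_measure_finite_Union) auto
  also have "\<dots> \<le> (\<Sum>k\<le>n. 2 * measure M (E k \<inter> T))"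
    by (intro sum_mono E_half) simp
  also have "\<dots> = 2 * measure M (\<Union>k\<le>n. E k \<inter> T)"
    using E_disj unfolding sum_distrib_left[symmetric]
    by (subst finite_measure_finite_Union) (auto simp: T_def disjoint_family_on_def)
  also have "\<dots> \<le> 2 * measure M T"
    by (intro mult_left_mono finite_measure_mono) (auto simp: T_def)
  finally show ?thesis
    by (simp add: T_def)
qed

lemma brownian_motion_measurable_later:
  assumes "filtration M F" "brownian_motion_from M F B u" "0 \<le> s" "s \<le> t"
  shows "B s \<in> borel_measurable (F t)"
proof -
  have "B s \<in> borel_measurable (F s)"
    using assms(2,3) by (simp add: brownian_motion_from_def)
  moreover have "space (F s) = space (F t)" "sets (F s) \<subseteq> sets (F t)"
    using assms(1,3,4) by (auto simp: filtration_def subalgebra_def)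
  ultimately show ?thesis
    unfolding measurable_def by auto
qed

lemma brownian_motion_measurable:
  assumes "filtration M F" "brownian_motion_from M F B u" "0 \<le> s"
  shows "B s \<in> borel_measurable M"
  using assms(1) brownian_motion_measurable_later[OF assms order.refl]
  by (intro measurable_from_subalg[of M "F s"]) (auto simp: filtration_def)

lemma brownian_motion_increment:
  assumes "brownian_motion_from M F B u" "0 \<le> s" "s < t" "A \<in> sets (F s)" "C \<in> sets borel"
  shows "measure M (A \<inter> {\<omega>\<in>space M. B t \<omega> - B s \<omega> \<in> C}) =
         measure M A * measure (density lborel (normal_density 0 (sqrt (t - s)))) C"
  using assms unfolding brownian_motion_from_def by blast

lemma brownian_motion_increment_tail:
  assumes "prob_space M" "filtration M F" "brownian_motion_from M F B u"
    and "0 \<le> s" "s < t" "0 \<le> b"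
  shows "measure M {\<omega>\<in>space M. b < \<bar>B t \<omega> - B s \<omega>\<bar>} \<le> 2 * exp (- b\<^sup>2 / (2 * (t - s)))"
proof -
  interpret prob_space M by fact
  have "space M \<in> sets (F s)"
    using assms(2) by (metis filtration_def sets.top subalgebra_def)
  then have "measure M {\<omega>\<in>space M. b < \<bar>B t \<omega> - B s \<omega>\<bar>}
      = measure (density lborel (normal_density 0 (sqrt (t - s)))) {x. b < \<bar>x\<bar>}"
    using brownian_motion_increment[OF assms(3-5), of "space M" "{x. b < \<bar>x\<bar>}"]
    by (simp add: prob_space Int_absorb1 subsetI)
  also have "\<dots> \<le> 2 * exp (- b\<^sup>2 / (2 * (t - s)))"
    using normal_tail_bound[of "sqrt (t - s)" b] assms(5,6) by simp
  finally show ?thesis .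
qed

lemma brownian_motion_grid_maximal_tail:
  assumes "prob_space M" "filtration M F" "brownian_motion_from M F B u"
    and "0 < h" "0 < n" "0 \<le> b"
  shows "measure M {\<omega>\<in>space M. \<exists>k\<le>n. b < \<bar>B (h * real k / real n) \<omega> - B 0 \<omega>\<bar>}
     \<le> 4 * exp (- b\<^sup>2 / (2 * h))"
proof -
  define t where "t k = h * real k / real n" for k
  define Y where "Y k \<omega> = B (t k) \<omega> - B 0 \<omega>" for k \<omega>
  have t_nonneg: "0 \<le> t k" for k
    using assms(4) by (simp add: t_def)
  have t_mono: "t j \<le> t k" if "j \<le> k" for j k
    using assms(4) that by (simp add: t_def divide_right_mono)
  have t_less: "t k < t n" if "k < n" for k
    using assms(4,5) that by (simp add: t_def pos_divide_less_eq)
  have half: "measure M A / 2 \<le> measure M (A \<inter> {\<omega>\<in>space M. Y n \<omega> - Y k \<omega> \<in> C})"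
    if "k < n" "A \<in> sets (F (t k))" "C \<in> sets borel"
      "\<And>\<sigma>. 0 < \<sigma> \<Longrightarrow> 1 / 2 \<le> measure (density lborel (normal_density 0 \<sigma>)) C" for k A C
  proof -
    have "measure M (A \<inter> {\<omega>\<in>space M. Y n \<omega> - Y k \<omega> \<in> C})
        = measure M A * measure (density lborel (normal_density 0 (sqrt (t n - t k)))) C"
      unfolding Y_def using brownian_motion_increment[OF assms(3) t_nonneg t_less that(2,3)] that(1)
      by simp
    moreover have "1 / 2 \<le> measure (density lborel (normal_density 0 (sqrt (t n - t k)))) C"
      using that(4) t_less[OF that(1)] by simp
    ultimately show ?thesis
      by (simp add: mult_left_mono[of "1/2" _ "measure M A", simplified])
  qed
  have "measure M {\<omega>\<in>space M. \<exists>k\<le>n. b < \<bar>Y k \<omega>\<bar>} \<le> 2 * measure M {\<omega>\<in>space M. b < \<bar>Y n \<omega>\<bar>}"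
  proof (rule levy_maximal_inequality[where G = "\<lambda>k. F (t k)"])
    show "subalgebra M (F (t k))" for k
      using assms(2) by (simp add: filtration_def)
    show "Y j \<in> borel_measurable (F (t k))" if "j \<le> k" "k \<le> n" for j k
      using brownian_motion_measurable_later[OF assms(2,3) t_nonneg t_mono[OF that(1)]]
        brownian_motion_measurable_later[OF assms(2,3) order.refl t_nonneg]
      unfolding Y_def by measurable
    show "measure M A / 2 \<le> measure M (A \<inter> {\<omega>\<in>space M. 0 \<le> Y n \<omega> - Y k \<omega>})"
      if "k < n" "A \<in> sets (F (t k))" for k A
      using half[OF that, of "{x. 0 \<le> x}"] normal_half_line_measure(1) by simp
    show "measure M A / 2 \<le> measure M (A \<inter> {\<omega>\<in>space M. Y n \<omega> - Y k \<omega> \<le> 0})"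
      if "k < n" "A \<in> sets (F (t k))" for k A
      using half[OF that, of "{x. x \<le> 0}"] normal_half_line_measure(2) by simp
  qed fact+
  also have "\<dots> \<le> 4 * exp (- b\<^sup>2 / (2 * h))"
    using brownian_motion_increment_tail[OF assms(1-3) order.refl, of "t n" b] assms
    by (simp add: Y_def t_def)
  finally show ?thesis
    by (simp add: Y_def t_def)
qed

lemma dyadic_floor_approx:
  fixes h t :: real
  assumes "0 < h" "0 \<le> t" "t \<le> h"
  shows "nat \<lfloor>t * 2 ^ j / h\<rfloor> \<le> 2 ^ j"
    and "(\<lambda>j. h * real (nat \<lfloor>t * 2 ^ j / h\<rfloor>) / 2 ^ j) \<longlonglongrightarrow> t"
proof -
  define k where "k j = nat \<lfloor>t * 2 ^ j / h\<rfloor>" for j :: nat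
  have k_le: "real (k j) \<le> t * 2 ^ j / h" and k_gt: "t * 2 ^ j / h - 1 < real (k j)" for j
  proof -
    have "0 \<le> t * 2 ^ j / h"
      using assms by simp
    then show "real (k j) \<le> t * 2 ^ j / h" "t * 2 ^ j / h - 1 < real (k j)"
      by (simp_all add: k_def of_int_floor_le real_of_int_floor_gt_diff_one)
  qed
  have "t * 2 ^ j / h \<le> 2 ^ j"
    using assms by (simp add: divide_le_eq mult_right_mono)
  with k_le[of j] have "real (k j) \<le> 2 ^ j"
    by (rule order.trans)
  then show "nat \<lfloor>t * 2 ^ j / h\<rfloor> \<le> 2 ^ j"
    unfolding k_def by simp
  have upper: "h * real (k j) / 2 ^ j \<le> t" and lower: "t - h / 2 ^ j \<le> h * real (k j) / 2 ^ j" for j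
  proof -
    have "h * real (k j) \<le> t * 2 ^ j" and "t * 2 ^ j - h \<le> h * real (k j)"
      using k_le[of j] k_gt[of j] assms(1) by (simp_all add: field_simps)
    then show "h * real (k j) / 2 ^ j \<le> t" and "t - h / 2 ^ j \<le> h * real (k j) / 2 ^ j"
      by (simp_all add: pos_le_divide_eq pos_divide_le_eq left_diff_distrib)
  qed
  have lim: "(\<lambda>j::nat. t - h / 2 ^ j) \<longlonglongrightarrow> t"
  proof -
    have "(\<lambda>j::nat. h / 2 ^ j) \<longlonglongrightarrow> 0"
      by (rule tendsto_divide_0[OF tendsto_const filterlim_realpow_sequentially_gt1]) simp
    then have "(\<lambda>j::nat. t - h / 2 ^ j) \<longlonglongrightarrow> t - 0"
      by (rule tendsto_diff[OF tendsto_const])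
    then show ?thesis
      by simp
  qed
  show "(\<lambda>j. h * real (nat \<lfloor>t * 2 ^ j / h\<rfloor>) / 2 ^ j) \<longlonglongrightarrow> t"
    unfolding k_def[symmetric]
    by (rule tendsto_sandwich[where f="\<lambda>j. t - h / 2 ^ j" and h="\<lambda>_. t"])
       (use lower upper lim in auto)
qed

lemma continuous_on_bound_from_dyadic_grid:
  fixes f :: "real \<Rightarrow> real"
  assumes "continuous_on {0..h} f" "0 < h" "t \<in> {0..h}"
    and grid: "\<And>j k. k \<le> 2 ^ j \<Longrightarrow> \<bar>f (h * real k / 2 ^ j) - c\<bar> \<le> b"
  shows "\<bar>f t - c\<bar> \<le> b"
proof -
  define s where "s = (\<lambda>j::nat. h * real (nat \<lfloor>t * 2 ^ j / h\<rfloor>) / 2 ^ j)"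
  have "s \<longlonglongrightarrow> t"
    unfolding s_def using assms(3) by (intro dyadic_floor_approx(2)[OF assms(2)]) auto
  moreover have "s j \<in> {0..h}" for j
  proof -
    have "real (nat \<lfloor>t * 2 ^ j / h\<rfloor>) \<le> 2 ^ j"
      using dyadic_floor_approx(1)[OF assms(2), of t j] assms(3) by (simp add: of_nat_le_iff[symmetric])
    then show ?thesis
      using assms(2) by (auto simp: s_def pos_divide_le_eq mult_left_le)
  qed
  ultimately have "(\<lambda>j. f (s j)) \<longlonglongrightarrow> f t"
    using assms(3) by (intro continuous_on_tendsto_compose[OF assms(1)]) auto
  then have "(\<lambda>j. \<bar>f (s j) - c\<bar>) \<longlonglongrightarrow> \<bar>f t - c\<bar>"
    by (intro tendsto_intros)
  moreover have "\<bar>f (s j) - c\<bar> \<le> b" for j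
    unfolding s_def using assms(3) by (intro grid dyadic_floor_approx(1)[OF assms(2)]) simp_all
  ultimately show ?thesis
    by (blast intro: LIMSEQ_le_const2)
qed

lemma brownian_motion_dyadic_grid_tail:
  assumes "prob_space M" "filtration M F" "brownian_motion_from M F B u"
    and "0 < h" "0 \<le> b"
  shows "\<exists>N\<in>sets M. measure M N \<le> 4 * exp (- b\<^sup>2 / (2 * h)) \<and>
           (\<forall>\<omega>\<in>space M - N. \<forall>j k. k \<le> 2 ^ j \<longrightarrow> \<bar>B (h * real k / 2 ^ j) \<omega> - B 0 \<omega>\<bar> \<le> b)"
proof -
  interpret prob_space M by fact
  define A where "A j = (\<Union>k\<le>(2::nat) ^ j. {\<omega>\<in>space M. b < \<bar>B (h * real k / real (2 ^ j)) \<omega> - B 0 \<omega>\<bar>})"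
    for j :: nat
  have A_sets: "A j \<in> sets M" for j
  proof -
    have [measurable]: "B s \<in> borel_measurable M" if "0 \<le> s" for s
      using brownian_motion_measurable[OF assms(2,3) that] .
    show ?thesis
      using assms(4) unfolding A_def by (intro sets.finite_UN) auto
  qed
  have "incseq A"
  proof (rule incseq_SucI, rule subsetI)
    fix j \<omega> assume "\<omega> \<in> A j"
    then obtain k where "k \<le> 2 ^ j" "\<omega> \<in> space M" "b < \<bar>B (h * real k / real (2 ^ j)) \<omega> - B 0 \<omega>\<bar>"
      by (auto simp: A_def)
    moreover have "h * real (2 * k) / real (2 ^ Suc j) = h * real k / real (2 ^ j)"
      by simp
    ultimately show "\<omega> \<in> A (Suc j)"
      unfolding A_def by (intro UN_I[of "2 * k"]) auto
  qed
  then have "(\<lambda>j. measure M (A j)) \<longlonglongrightarrow> measure M (\<Union>j. A j)"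
    using A_sets by (intro Lim_measure_incseq) auto
  moreover have "measure M (A j) \<le> 4 * exp (- b\<^sup>2 / (2 * h))" for j
  proof -
    have "A j = {\<omega>\<in>space M. \<exists>k\<le>2 ^ j. b < \<bar>B (h * real k / real (2 ^ j)) \<omega> - B 0 \<omega>\<bar>}"
      by (auto simp: A_def)
    then show ?thesis
      using brownian_motion_grid_maximal_tail[OF assms(1-4), of "2 ^ j" b] assms(5) by simp
  qed
  ultimately have "measure M (\<Union>j. A j) \<le> 4 * exp (- b\<^sup>2 / (2 * h))"
    by (blast intro: LIMSEQ_le_const2)
  moreover have "\<bar>B (h * real k / 2 ^ j) \<omega> - B 0 \<omega>\<bar> \<le> b"
    if "\<omega> \<in> space M - (\<Union>j. A j)" "k \<le> 2 ^ j" for \<omega> j k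
    using that unfolding A_def by (auto simp: not_less)
  ultimately show ?thesis
    using A_sets by blast
qed

text \<open>The event that the path leaves the band need not be measurable; it is covered by a
  measurable N instead.\<close>
lemma brownian_motion_sup_tail:
  assumes "prob_space M" "filtration M F" "brownian_motion_from M F B u"
    and "0 < h" "0 \<le> b"
  shows "\<exists>N\<in>sets M. measure M N \<le> 4 * exp (- b\<^sup>2 / (2 * h)) \<and>
           (AE \<omega> in M. \<omega> \<notin> N \<longrightarrow> (\<forall>t\<in>{0..h}. \<bar>B t \<omega> - u\<bar> \<le> b))"
proof -
  obtain N where "N \<in> sets M" "measure M N \<le> 4 * exp (- b\<^sup>2 / (2 * h))"
    and grid: "\<And>\<omega> j k. \<omega> \<in> space M - N \<Longrightarrow> k \<le> 2 ^ j \<Longrightarrow> \<bar>B (h * real k / 2 ^ j) \<omega> - B 0 \<omega>\<bar> \<le> b"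
    using brownian_motion_dyadic_grid_tail[OF assms] by blast
  moreover have "AE \<omega> in M. \<omega> \<notin> N \<longrightarrow> (\<forall>t\<in>{0..h}. \<bar>B t \<omega> - u\<bar> \<le> b)"
  proof -
    have "AE \<omega> in M. B 0 \<omega> = u" "AE \<omega> in M. continuous_on {0..} (\<lambda>t. B t \<omega>)"
      using assms(3) by (auto simp: brownian_motion_from_def)
    then show ?thesis
      using AE_space
    proof eventually_elim
      case (elim \<omega>)
      show ?case
      proof (intro impI ballI)
        fix t assume "\<omega> \<notin> N" "t \<in> {0..h}"
        then have "\<bar>B (h * real k / 2 ^ j) \<omega> - u\<bar> \<le> b" if "k \<le> 2 ^ j" for j k
          using grid[of \<omega> k j] that elim(1,3) by simp
        moreover have "continuous_on {0..h} (\<lambda>t. B t \<omega>)"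
          using elim(2) by (rule continuous_on_subset) auto
        ultimately show "\<bar>B t \<omega> - u\<bar> \<le> b"
          using continuous_on_bound_from_dyadic_grid[OF _ assms(4) \<open>t \<in> {0..h}\<close>] by blast
      qed
    qed
  qed
  ultimately show ?thesis
    by blast
qed

lemma monotone_grid_interpolation:
  fixes Z :: "real \<Rightarrow> real"
  assumes "mono Z" "0 < N" "0 \<le> u" "u \<le> 1"
    and grid: "\<And>k. k \<le> N \<Longrightarrow> \<bar>Z (real k / real N) - real k / real N\<bar> \<le> B"
  shows "\<bar>Z u - u\<bar> \<le> B + 1 / real N"
proof -
  define x where "x = u * real N"
  have "0 \<le> x" "x \<le> real N"
    using assms(2-4) by (auto simp: x_def mult_left_le_one_le)
  define k1 k2 where "k1 = nat \<lfloor>x\<rfloor>" and "k2 = nat \<lceil>x\<rceil>"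
  have k1: "real k1 \<le> x" "x < real k1 + 1" and k2: "x \<le> real k2" "real k2 < x + 1"
    using \<open>0 \<le> x\<close> by (auto simp: k1_def k2_def) (use ceiling_correct[of x] in linarith)
  have "k2 \<le> N"
    using \<open>x \<le> real N\<close> \<open>0 \<le> x\<close> unfolding k2_def by (metis ceiling_le_iff nat_le_iff of_int_of_nat_eq)
  have "k1 \<le> N"
    using k1(1) k2(1) \<open>k2 \<le> N\<close> by linarith
  have "u = x / real N"
    using assms(2) by (simp add: x_def)
  then have near: "real k1 / real N \<le> u" "u - real k1 / real N \<le> 1 / real N"
    "u \<le> real k2 / real N" "real k2 / real N - u \<le> 1 / real N"
    using k1 k2 by (auto simp: diff_divide_distrib[symmetric] intro!: divide_right_mono)
  then have "Z (real k1 / real N) \<le> Z u" "Z u \<le> Z (real k2 / real N)"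
    using \<open>mono Z\<close> by (simp_all add: monoD)
  with \<open>k1 \<le> N\<close> \<open>k2 \<le> N\<close> show ?thesis
    using grid[of k1] grid[of k2] near by (simp add: abs_le_iff)
qed

text \<open>Level m of the grid argument works on the time scale e^(-mL) with the grid k / grid_size L m
  of mesh about e^(-mL/2); grid_threshold L m is e^L times a lower bound of sqrt(t ln(1/t))
  on the next scale e^(-(m+1)L) \<le> t \<le> e^(-mL).\<close>
definition grid_size :: "real \<Rightarrow> nat \<Rightarrow> nat" where
  "grid_size L m = nat \<lceil>exp (real m * L / 2)\<rceil>"

definition grid_threshold :: "real \<Rightarrow> nat \<Rightarrow> real" where
  "grid_threshold L m = exp L * sqrt (exp (- ((real m + 1) * L)) * real m * L)"

lemma grid_size_ge: "exp (real m * L / 2) \<le> real (grid_size L m)"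
  unfolding grid_size_def by (rule real_nat_ceiling_ge)

lemma grid_size_pos: "0 \<le> L \<Longrightarrow> 0 < grid_size L m"
  using less_le_trans[OF exp_gt_zero grid_size_ge[of m L]] by simp

lemma grid_size_le: "0 \<le> L \<Longrightarrow> real (grid_size L m) + 1 \<le> 3 * exp (real m * L / 2)"
proof -
  assume "0 \<le> L"
  then have "1 \<le> exp (real m * L / 2)"
    by simp
  moreover have "real (grid_size L m) < exp (real m * L / 2) + 1"
    using ceiling_correct[of "exp (real m * L / 2)"] by (simp add: grid_size_def of_nat_nat)
  ultimately show ?thesis
    by linarith
qed

lemma exp_scale_bracket:
  assumes "0 < L" "0 < y" "y < exp (- (real m1 * L))"
  obtains m where "m1 \<le> m" "exp (- ((real m + 1) * L)) < y" "y \<le> exp (- (real m * L))"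
proof -
  define x where "x = - ln y / L"
  have "ln y < - (real m1 * L)"
    using assms(2,3) ln_less_cancel_iff[of y "exp (- (real m1 * L))"] by simp
  then have "real m1 < x"
    using assms(1) by (simp add: x_def field_simps)
  define m where "m = nat \<lfloor>x\<rfloor>"
  have "real m \<le> x" "x < real m + 1"
    using \<open>real m1 < x\<close> by (auto simp: m_def)
  moreover have "x * L = - ln y"
    using assms(1) by (simp add: x_def)
  ultimately have "real m * L \<le> - ln y" "- ln y < (real m + 1) * L"
    using assms(1) mult_right_mono[of "real m" x L] mult_strict_right_mono[of x "real m + 1" L]
    by auto
  then have "exp (- ((real m + 1) * L)) < exp (ln y)" "exp (ln y) \<le> exp (- (real m * L))"
    by simp_all
  then have "exp (- ((real m + 1) * L)) < y" "y \<le> exp (- (real m * L))"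
    using assms(2) by simp_all
  moreover have "m1 \<le> m"
    using \<open>real m1 < x\<close> by (simp add: m_def le_nat_floor less_imp_le)
  ultimately show ?thesis
    using that by blast
qed

lemma scale_lower_bound_le:
  assumes "0 < L" "exp (- ((real m + 1) * L)) < y" "y \<le> exp (- (real m * L))"
  shows "exp (- ((real m + 1) * L)) * (real m * L) \<le> y * ln (1 / y)"
proof -
  have "0 < y"
    using assms(2) exp_gt_zero less_trans by blast
  have "ln y \<le> - (real m * L)"
    using assms(3) \<open>0 < y\<close> ln_le_cancel_iff[of y "exp (- (real m * L))"] by simp
  then have "real m * L \<le> ln (1 / y)"
    using \<open>0 < y\<close> by (simp add: ln_div)
  then show ?thesis
    using assms(1,2) \<open>0 < y\<close> by (intro mult_mono) auto
qed

lemma exp_half_scale_le: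
  assumes "0 < L" "0 < \<delta>" "exp L / (\<delta>\<^sup>2 * L) \<le> real m"
  shows "exp (- (real m * L / 2)) \<le> \<delta> * sqrt (exp (- ((real m + 1) * L)) * real m * L)"
proof (rule power2_le_imp_le)
  have sq: "(exp (- (real m * L / 2)))\<^sup>2 = exp (- (real m * L))"
    by (simp add: power2_eq_square exp_add[symmetric])
  have "1 \<le> \<delta>\<^sup>2 * real m * L * exp (- L)"
    using assms by (simp add: divide_le_eq mult_ac exp_minus field_simps)
  then have "exp (- (real m * L)) \<le> exp (- (real m * L)) * (\<delta>\<^sup>2 * real m * L * exp (- L))"
    by simp
  also have "\<dots> = (\<delta> * sqrt (exp (- ((real m + 1) * L)) * real m * L))\<^sup>2"
    using assms(1) by (simp add: power_mult_distrib algebra_simps exp_add[symmetric])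
  finally show "(exp (- (real m * L / 2)))\<^sup>2 \<le> (\<delta> * sqrt (exp (- ((real m + 1) * L)) * real m * L))\<^sup>2"
    by (simp only: sq)
qed (use assms(1,2) in simp)

lemma eventually_modulus_le_of_grid_bounds:
  fixes Z :: "real \<Rightarrow> real \<Rightarrow> real"
  assumes "0 < L" "0 < \<delta>" and mono: "\<And>t. 0 \<le> t \<Longrightarrow> mono (\<lambda>u. Z u t)"
    and grid: "\<And>m k t. m0 \<le> m \<Longrightarrow> k \<le> grid_size L m \<Longrightarrow> 0 \<le> t \<Longrightarrow> t \<le> exp (- (real m * L)) \<Longrightarrow>
       \<bar>Z (real k / real (grid_size L m)) t - real k / real (grid_size L m)\<bar> \<le> grid_threshold L m"
  shows "\<forall>\<^sub>F t in at_right 0. \<forall>u\<in>{0..1}. \<bar>Z u t - u\<bar> / sqrt (t * ln (1 / t)) \<le> exp L + \<delta>"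
proof -
  define m1 where "m1 = max (max m0 1) (nat \<lceil>exp L / (\<delta>\<^sup>2 * L)\<rceil>)"
  have "m0 \<le> m1" "1 \<le> m1" "exp L / (\<delta>\<^sup>2 * L) \<le> real m1"
    unfolding m1_def by (auto intro: order.trans[OF real_nat_ceiling_ge])
  show ?thesis
    unfolding eventually_at_right_field
  proof (intro exI[of _ "exp (- (real m1 * L))"] conjI allI impI ballI)
    fix t u :: real
    assume "0 < t" "t < exp (- (real m1 * L))" and u: "u \<in> {0..1}"
    then obtain m where "m1 \<le> m" and m: "exp (- ((real m + 1) * L)) < t" "t \<le> exp (- (real m * L))"
      using exp_scale_bracket[OF \<open>0 < L\<close>] by blast
    define s where "s = sqrt (exp (- ((real m + 1) * L)) * real m * L)"
    have "0 < s"
      using \<open>1 \<le> m1\<close> \<open>m1 \<le> m\<close> \<open>0 < L\<close> by (simp add: s_def)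
    have "s \<le> sqrt (t * ln (1 / t))"
      using scale_lower_bound_le[OF \<open>0 < L\<close> m] by (simp add: s_def mult.assoc)
    have "1 / real (grid_size L m) \<le> exp (- (real m * L / 2))"
      using grid_size_ge[of m L] by (simp add: exp_minus divide_le_eq field_simps)
    also have "\<dots> \<le> \<delta> * s"
      unfolding s_def using \<open>exp L / (\<delta>\<^sup>2 * L) \<le> real m1\<close> \<open>m1 \<le> m\<close>
      by (intro exp_half_scale_le[OF \<open>0 < L\<close> \<open>0 < \<delta>\<close>]) linarith
    finally have mesh: "1 / real (grid_size L m) \<le> \<delta> * s" .
    have "\<bar>Z u t - u\<bar> \<le> grid_threshold L m + 1 / real (grid_size L m)"
      using u \<open>m0 \<le> m1\<close> \<open>m1 \<le> m\<close> \<open>0 < t\<close> m(2) \<open>0 < L\<close>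
      by (intro monotone_grid_interpolation mono grid_size_pos grid) auto
    also have "\<dots> \<le> (exp L + \<delta>) * s"
      using mesh by (simp add: grid_threshold_def s_def algebra_simps)
    also have "\<dots> \<le> (exp L + \<delta>) * sqrt (t * ln (1 / t))"
      using \<open>s \<le> sqrt (t * ln (1 / t))\<close> \<open>0 < \<delta>\<close> by (intro mult_left_mono) auto
    finally have "\<bar>Z u t - u\<bar> \<le> (exp L + \<delta>) * sqrt (t * ln (1 / t))" .
    moreover have "0 < sqrt (t * ln (1 / t))"
      using \<open>0 < s\<close> \<open>s \<le> sqrt (t * ln (1 / t))\<close> by linarith
    ultimately show "\<bar>Z u t - u\<bar> / sqrt (t * ln (1 / t)) \<le> exp L + \<delta>"
      by (simp add: pos_divide_le_eq)
  qed simp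
qed

lemma grid_threshold_tail_exponent:
  assumes "0 \<le> L"
  shows "(grid_threshold L m)\<^sup>2 / (2 * exp (- (real m * L))) = exp L * real m * L / 2"
proof -
  have "exp L * exp L * exp (- ((real m + 1) * L)) = exp (- (real m * L)) * exp L"
    by (simp add: exp_add[symmetric] algebra_simps)
  then have "(grid_threshold L m)\<^sup>2 = exp (- (real m * L)) * (exp L * real m * L)"
    using assms by (simp add: grid_threshold_def power_mult_distrib power2_eq_square mult_ac)
  then show ?thesis
    by simp
qed

lemma brownian_motion_grid_level_tail:
  assumes "prob_space M" "filtration M F" "brownian_motion_from M F B u" "0 < L"
  shows "\<exists>N\<in>sets M. measure M N \<le> 4 * exp (- (exp L * real m * L / 2)) \<and>
           (AE \<omega> in M. \<omega> \<notin> N \<longrightarrow> (\<forall>t\<in>{0..exp (- (real m * L))}. \<bar>B t \<omega> - u\<bar> \<le> grid_threshold L m))"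
proof -
  have "0 \<le> grid_threshold L m"
    using assms(4) by (simp add: grid_threshold_def)
  moreover have exponent: "- (grid_threshold L m)\<^sup>2 / (2 * exp (- (real m * L))) = - (exp L * real m * L / 2)"
    using assms(4) by (simp only: minus_divide_left[symmetric] grid_threshold_tail_exponent less_imp_le)
  ultimately show ?thesis
    using brownian_motion_sup_tail[OF assms(1-3) exp_gt_zero[of "- (real m * L)"], of "grid_threshold L m"]
    unfolding exponent by simp
qed

lemma summable_grid_level_tails:
  assumes "0 < L"
  shows "summable (\<lambda>m. (real (grid_size L m) + 1) * (4 * exp (- (exp L * real m * L / 2))))"
proof -
  define \<rho> where "\<rho> = exp ((1 - exp L) * L / 2)"
  have "norm \<rho> < 1"
    using assms by (auto simp: \<rho>_def mult_neg_pos)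
  have bound: "norm ((real (grid_size L m) + 1) * (4 * exp (- (exp L * real m * L / 2)))) \<le> 12 * \<rho> ^ m"
    for m
  proof -
    have "(real (grid_size L m) + 1) * (4 * exp (- (exp L * real m * L / 2)))
        \<le> 3 * exp (real m * L / 2) * (4 * exp (- (exp L * real m * L / 2)))"
      using grid_size_le[of L m] assms by (intro mult_right_mono) auto
    also have "\<dots> = 12 * \<rho> ^ m"
      by (simp add: \<rho>_def exp_of_nat_mult[symmetric] exp_add[symmetric] algebra_simps)
    finally show ?thesis
      by simp
  qed
  show ?thesis
    by (rule summable_comparison_test'[OF summable_mult[OF summable_geometric[OF \<open>norm \<rho> < 1\<close>]]])
       (rule bound)
qed

lemma AE_eventually_grid_bounds:
  fixes X :: "real \<Rightarrow> real \<Rightarrow> 'a \<Rightarrow> real"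
  assumes "prob_space M" "filtration M F" "\<And>u. brownian_motion_from M F (X u) u" "0 < L"
  shows "AE \<omega> in M. \<exists>m0. \<forall>m k t. m0 \<le> m \<longrightarrow> k \<le> grid_size L m \<longrightarrow> 0 \<le> t \<longrightarrow> t \<le> exp (- (real m * L)) \<longrightarrow>
      \<bar>X (real k / real (grid_size L m)) t \<omega> - real k / real (grid_size L m)\<bar> \<le> grid_threshold L m"
proof -
  interpret prob_space M by fact
  define g where "g m k = real k / real (grid_size L m)" for m k
  define p where "p m = 4 * exp (- (exp L * real m * L / 2))" for m
  have "\<forall>m k. \<exists>N. N \<in> sets M \<and> measure M N \<le> p m \<and>
      (AE \<omega> in M. \<omega> \<notin> N \<longrightarrow> (\<forall>t\<in>{0..exp (- (real m * L))}. \<bar>X (g m k) t \<omega> - g m k\<bar> \<le> grid_threshold L m))"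
    using brownian_motion_grid_level_tail[OF assms(1,2,3) assms(4)] unfolding p_def by blast
  then obtain N where "\<forall>m k. N m k \<in> sets M \<and> measure M (N m k) \<le> p m \<and>
      (AE \<omega> in M. \<omega> \<notin> N m k \<longrightarrow> (\<forall>t\<in>{0..exp (- (real m * L))}. \<bar>X (g m k) t \<omega> - g m k\<bar> \<le> grid_threshold L m))"
    unfolding choice_iff by blast
  then have N_sets: "\<And>m k. N m k \<in> sets M" and N_small: "\<And>m k. measure M (N m k) \<le> p m"
    and N_cover: "\<And>m k. AE \<omega> in M. \<omega> \<notin> N m k \<longrightarrow>
        (\<forall>t\<in>{0..exp (- (real m * L))}. \<bar>X (g m k) t \<omega> - g m k\<bar> \<le> grid_threshold L m)"
    by blast+
  define D where "D m = (\<Union>k\<le>grid_size L m. N m k)" for m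
  have "norm (measure M (D m)) \<le> (real (grid_size L m) + 1) * p m" for m
  proof -
    have "measure M (D m) \<le> (\<Sum>k\<le>grid_size L m. measure M (N m k))"
      unfolding D_def using N_sets by (intro measure_UNION_le) auto
    also have "\<dots> \<le> (\<Sum>k\<le>grid_size L m. p m)"
      by (intro sum_mono N_small)
    finally show ?thesis
      by (simp add: algebra_simps)
  qed
  then have "summable (\<lambda>m. measure M (D m))"
    unfolding p_def by (auto intro: summable_comparison_test'[OF summable_grid_level_tails[OF assms(4)]])
  then have "AE \<omega> in M. \<forall>\<^sub>F m in sequentially. \<omega> \<in> space M - D m"
    using N_sets by (intro borel_cantelli_AE1) (auto simp: D_def less_top[symmetric])
  moreover have "AE \<omega> in M. \<forall>m k. \<omega> \<notin> N m k \<longrightarrow>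
      (\<forall>t\<in>{0..exp (- (real m * L))}. \<bar>X (g m k) t \<omega> - g m k\<bar> \<le> grid_threshold L m)"
    using N_cover by (simp add: AE_all_countable)
  ultimately show ?thesis
  proof eventually_elim
    case (elim \<omega>)
    then obtain m0 where m0: "\<And>m. m0 \<le> m \<Longrightarrow> \<omega> \<notin> D m"
      unfolding eventually_sequentially by blast
    show ?case
    proof (intro exI[of _ m0] allI impI)
      fix m k t assume "m0 \<le> m" "k \<le> grid_size L m" "0 \<le> t" "t \<le> exp (- (real m * L))"
      then have "\<omega> \<notin> N m k"
        using m0 unfolding D_def by blast
      then show "\<bar>X (real k / real (grid_size L m)) t \<omega> - real k / real (grid_size L m)\<bar> \<le> grid_threshold L m"
        using elim(2) \<open>0 \<le> t\<close> \<open>t \<le> exp (- (real m * L))\<close> unfolding g_def by simp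
    qed
  qed
qed

lemma AE_limsup_modulus_le:
  fixes X :: "real \<Rightarrow> real \<Rightarrow> 'a \<Rightarrow> real"
  assumes "prob_space M" "filtration M F" "\<And>u. brownian_motion_from M F (X u) u"
    and mono: "\<And>t \<omega>. 0 \<le> t \<Longrightarrow> \<omega> \<in> space M \<Longrightarrow> mono (\<lambda>u. X u t \<omega>)"
    and "0 < L"
  shows "AE \<omega> in M. Limsup (at_right 0)
           (\<lambda>t. SUP u\<in>{0..1}. ereal (\<bar>X u t \<omega> - u\<bar> / sqrt (t * ln (1 / t)))) \<le> ereal (exp L + L)"
  using AE_eventually_grid_bounds[OF assms(1-3,5)] AE_space
proof eventually_elim
  case (elim \<omega>)
  then obtain m0 where "\<And>m k t. m0 \<le> m \<Longrightarrow> k \<le> grid_size L m \<Longrightarrow> 0 \<le> t \<Longrightarrow> t \<le> exp (- (real m * L)) \<Longrightarrow>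
      \<bar>X (real k / real (grid_size L m)) t \<omega> - real k / real (grid_size L m)\<bar> \<le> grid_threshold L m"
    by blast
  then have "\<forall>\<^sub>F t in at_right 0. \<forall>u\<in>{0..1}. \<bar>X u t \<omega> - u\<bar> / sqrt (t * ln (1 / t)) \<le> exp L + L"
    using mono elim(2) \<open>0 < L\<close>
    by (intro eventually_modulus_le_of_grid_bounds[where Z = "\<lambda>u t. X u t \<omega>"]) auto
  then have "\<forall>\<^sub>F t in at_right 0.
      (SUP u\<in>{0..1}. ereal (\<bar>X u t \<omega> - u\<bar> / sqrt (t * ln (1 / t)))) \<le> ereal (exp L + L)"
    by eventually_elim (auto intro: SUP_least)
  then show ?case
    by (rule Limsup_bounded)
qed

theorem theorem5:
  fixes M :: "'a measure" and F :: "real \<Rightarrow> 'a measure"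
    and \<phi> :: "real \<Rightarrow> real" and X :: "real \<Rightarrow> real \<Rightarrow> 'a \<Rightarrow> real"
  assumes "prob_space M"
    and "positive_definite \<phi>"
    and "\<phi> 0 = 1"
    and "\<And>x. x \<noteq> 0 \<Longrightarrow> \<bar>\<phi> x\<bar> < 1"
    and "harris_point_motion M F \<phi> X"
  shows "AE \<omega> in M.
           Limsup (at_right 0)
             (\<lambda>t. SUP u\<in>{0..1}. ereal (\<bar>X u t \<omega> - u\<bar> / sqrt (t * ln (1 / t)))) \<le> 1"
proof -
  have "filtration M F" "\<And>u. brownian_motion_from M F (X u) u"
    "\<And>t \<omega>. 0 \<le> t \<Longrightarrow> \<omega> \<in> space M \<Longrightarrow> mono (\<lambda>u. X u t \<omega>)"
    using assms(5) by (auto simp: harris_point_motion_def)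
  then have "AE \<omega> in M. \<forall>n. Limsup (at_right 0)
      (\<lambda>t. SUP u\<in>{0..1}. ereal (\<bar>X u t \<omega> - u\<bar> / sqrt (t * ln (1 / t))))
        \<le> ereal (exp (1 / Suc n) + 1 / Suc n)"
    unfolding AE_all_countable using AE_limsup_modulus_le[OF assms(1)] by simp
  then show ?thesis
  proof eventually_elim
    case (elim \<omega>)
    have "(\<lambda>n. ereal (exp (1 / Suc n) + 1 / Suc n)) \<longlonglongrightarrow> ereal (exp 0 + 0)"
      by (intro tendsto_intros LIMSEQ_Suc[OF lim_const_over_n])
    then have "(\<lambda>n. ereal (exp (1 / Suc n) + 1 / Suc n)) \<longlonglongrightarrow> 1"
      by (simp add: one_ereal_def)
    then show ?case
      by (rule LIMSEQ_le_const) (use elim in blast)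
  qed
qed

end
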